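(* Let $d_k$ denote the number of edges of $\mathbf{DCM}_k$ for $k\ge 1$, set $d_0=1$, let $z(x)=\sum_{k\ge 0}d_kx^k$ and $Z(x)=2z(x)-1$. Then, as formal power series, $$Z(x)=1+\frac{2x^2Z(x)^4}{1-xZ(x)^2}.$$
   Context: Let $k\ge 1$ and let $X_{2k}=\{P_1,\dots,P_{2k}\}$ be $2k$ points in convex position in the plane, labeled in clockwise cyclic order. A matching of $X_{2k}$ means a set of $k$ pairwise non-crossing straight segments (edges) with endpoints in $X_{2k}$ covering every point exactly once. Two matchings $M,M'$ of $X_{2k}$ are disjoint compatible if they have no common edge and no edge of $M$ crosses an edge of $M'$. $\mathbf{DCM}_k$ is the graph whose vertices are the matchings of $X_{2k}$, two being adjacent iff they are disjoint compatible. *)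

theory Defs
  imports "HOL-Computational_Algebra.Formal_Power_Series"
begin

text \<open>Points of X_{2k} are labelled 0,...,2k-1 in clockwise cyclic order.
  For points in (strictly) convex position, two segments with four distinct endpoints
  cross iff their endpoints interleave in the cyclic order; segments sharing an
  endpoint do not cross.\<close>

definition crosses :: "nat set \<Rightarrow> nat set \<Rightarrow> bool" where
  "crosses e f \<longleftrightarrow> (\<exists>a b c d. e = {a, b} \<and> f = {c, d} \<and> a < b \<and> c < d \<and>
      ((a < c \<and> c < b \<and> b < d) \<or> (c < a \<and> a < d \<and> d < b)))"

definition is_edge :: "nat \<Rightarrow> nat set \<Rightarrow> bool" where
  "is_edge n e \<longleftrightarrow> (\<exists>i j. e = {i, j} \<and> i < j \<and> j < n)"

definition is_matching :: "nat \<Rightarrow> nat set set \<Rightarrow> bool" where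
  "is_matching n M \<longleftrightarrow>
     (\<forall>e\<in>M. is_edge n e) \<and>
     (\<forall>i<n. \<exists>!e. e \<in> M \<and> i \<in> e) \<and>
     (\<forall>e\<in>M. \<forall>f\<in>M. \<not> crosses e f)"

definition disjoint_compatible :: "nat set set \<Rightarrow> nat set set \<Rightarrow> bool" where
  "disjoint_compatible M M' \<longleftrightarrow> M \<inter> M' = {} \<and> (\<forall>e\<in>M. \<forall>f\<in>M'. \<not> crosses e f)"

definition dcm_adj :: "nat \<Rightarrow> nat set set \<Rightarrow> nat set set \<Rightarrow> bool" where
  "dcm_adj k M M' \<longleftrightarrow> is_matching (2*k) M \<and> is_matching (2*k) M' \<and> disjoint_compatible M M'"

definition dcm_edge_set :: "nat \<Rightarrow> nat set set set set" where
  "dcm_edge_set k = {{M, M'} | M M'. dcm_adj k M M'}"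

definition dcm_d :: "nat \<Rightarrow> nat" where
  "dcm_d k = (if k = 0 then 1 else card (dcm_edge_set k))"

end

theory Submission
  imports Defs
begin

text \<open>
  Let \<open>t\<^sub>n\<close> count the ordered pairs of disjoint compatible matchings of \<open>n\<close> points in
  convex position, so that \<open>t\<^sub>2\<^sub>k = 2 d\<^sub>k\<close>. Classify such a pair by the partners
  \<open>j\<^sub>1 \<noteq> j\<^sub>2\<close> of the first point in the two matchings. The points strictly under the
  shorter of the two edges, and those beyond the longer one, are then matched among themselves in
  both matchings (in one matching by non-crossing, in the other by a parity argument), and the
  remaining points carry a pair of staggered matchings. Counting the staggered configurations the
  same way gives, for the generating functions \<open>T, A, B\<close> of \<open>t\<close> and of the two staggered
  counts, \<open>T = 1 + 2xT\<^sup>2A\<close>, \<open>A = xTB\<close> and \<open>B = xT(x + A)\<close>. Eliminating \<open>A\<close> and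
  \<open>B\<close> gives \<open>T(1 - x\<^sup>2T\<^sup>2) = 1 - x\<^sup>2T\<^sup>2 + 2x\<^sup>4T\<^sup>4\<close>; as \<open>t\<close> vanishes at odd
  indices, \<open>T(x) = Z(x\<^sup>2)\<close>, which is the claimed identity.\<close>

unbundle fps_syntax

section \<open>Non-crossing matchings\<close>

definition nc_matching :: "nat set \<Rightarrow> nat set set \<Rightarrow> bool" where
  "nc_matching S M \<longleftrightarrow>
     (\<forall>e\<in>M. \<exists>i j. e = {i, j} \<and> i < j \<and> i \<in> S \<and> j \<in> S) \<and>
     (\<forall>i\<in>S. \<exists>!e. e \<in> M \<and> i \<in> e) \<and>
     (\<forall>e\<in>M. \<forall>f\<in>M. \<not> crosses e f)"

definition is_block :: "nat set \<Rightarrow> nat set set \<Rightarrow> bool" where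
  "is_block A M \<longleftrightarrow> (\<forall>e\<in>M. e \<subseteq> A \<or> e \<inter> A = {})"

lemma is_matching_iff_nc_matching: "is_matching n M \<longleftrightarrow> nc_matching {0..<n} M"
proof -
  have bound: "(i < j \<and> i < n \<and> j < n) \<longleftrightarrow> (i < j \<and> j < n)" for i j :: nat
    by auto
  have ball: "(\<forall>i<n. P i) \<longleftrightarrow> (\<forall>i\<in>{0..<n}. P i)" for P
    by auto
  show ?thesis
    unfolding is_matching_def nc_matching_def is_edge_def ball atLeastLessThan_iff
    by (simp only: bound le0 simp_thms)
qed

lemma crosses_sym: "crosses e f \<longleftrightarrow> crosses f e"
  unfolding crosses_def by blast

lemma crosses_iff:
  assumes "a < b" "c < d"
  shows "crosses {a, b} {c, d} \<longleftrightarrow> a < c \<and> c < b \<and> b < d \<or> c < a \<and> a < d \<and> d < b"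
proof
  assume "crosses {a, b} {c, d}"
  then obtain p q r s where "{a, b} = {p, q}" "{c, d} = {r, s}" "p < q" "r < s"
      "p < r \<and> r < q \<and> q < s \<or> r < p \<and> p < s \<and> s < q"
    unfolding crosses_def by blast
  moreover have "a = p \<and> b = q" "c = r \<and> d = s"
    using assms \<open>p < q\<close> \<open>r < s\<close> \<open>{a, b} = {p, q}\<close> \<open>{c, d} = {r, s}\<close>
    by (auto simp: doubleton_eq_iff)
  ultimately show "a < c \<and> c < b \<and> b < d \<or> c < a \<and> a < d \<and> d < b"
    by blast
next
  assume "a < c \<and> c < b \<and> b < d \<or> c < a \<and> a < d \<and> d < b"
  with assms show "crosses {a, b} {c, d}"
    unfolding crosses_def by blast
qed

lemma not_crosses_interval:
  assumes "e \<subseteq> {l..h}" "f \<inter> {l<..<h} = {}"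
  shows "\<not> crosses e f" "\<not> crosses f e"
proof -
  show "\<not> crosses e f"
  proof
    assume "crosses e f"
    then obtain a b c d where "e = {a, b}" "f = {c, d}"
      "a < c \<and> c < b \<and> b < d \<or> c < a \<and> a < d \<and> d < b"
      unfolding crosses_def by blast
    with assms show False by auto
  qed
  then show "\<not> crosses f e" by (simp add: crosses_sym)
qed

lemma not_crosses_sides:
  assumes "e \<subseteq> {..k}" "f \<subseteq> {k..}"
  shows "\<not> crosses e f" "\<not> crosses f e"
proof -
  have "e \<subseteq> {0..k}" "f \<inter> {0<..<k} = {}"
    using assms by auto
  then show "\<not> crosses e f" "\<not> crosses f e"
    by (rule not_crosses_interval)+
qed

lemma not_crosses_nested_or_apart:
  assumes "a < b" "c < d" "\<not> crosses {a, b} {c, d}"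
  shows "{c, d} \<subseteq> {a..b} \<or> {c, d} \<inter> {a<..<b} = {}"
  using assms(3) unfolding crosses_iff[OF assms(1,2)] using assms(1,2) by auto

lemma nc_matching_edge:
  "nc_matching S M \<Longrightarrow> e \<in> M \<Longrightarrow> \<exists>i j. e = {i, j} \<and> i < j \<and> i \<in> S \<and> j \<in> S"
  unfolding nc_matching_def by blast

lemma nc_matching_edgeE:
  assumes "nc_matching S M" "e \<in> M"
  obtains i j where "e = {i, j}" "i < j" "i \<in> S" "j \<in> S"
  using nc_matching_edge[OF assms] by blast

lemma nc_matching_edge_subset: "nc_matching S M \<Longrightarrow> e \<in> M \<Longrightarrow> e \<subseteq> S"
  by (auto dest: nc_matching_edge)

lemma nc_matching_edge_card: "nc_matching S M \<Longrightarrow> e \<in> M \<Longrightarrow> card e = 2"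
  by (auto dest: nc_matching_edge)

lemma nc_matching_edge_nonempty: "nc_matching S M \<Longrightarrow> e \<in> M \<Longrightarrow> e \<noteq> {}"
  by (auto dest: nc_matching_edge)

lemma nc_matching_covers: "nc_matching S M \<Longrightarrow> x \<in> S \<Longrightarrow> \<exists>e\<in>M. x \<in> e"
  unfolding nc_matching_def by blast

lemma nc_matching_unique:
  "nc_matching S M \<Longrightarrow> e \<in> M \<Longrightarrow> f \<in> M \<Longrightarrow> x \<in> e \<Longrightarrow> x \<in> f \<Longrightarrow> e = f"
proof -
  assume "nc_matching S M" "e \<in> M" "f \<in> M" "x \<in> e" "x \<in> f"
  moreover have "x \<in> S"
    using calculation nc_matching_edge_subset by blast
  ultimately show "e = f"
    unfolding nc_matching_def by blast
qed

lemma nc_matching_noncrossing: "nc_matching S M \<Longrightarrow> e \<in> M \<Longrightarrow> f \<in> M \<Longrightarrow> \<not> crosses e f"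
  unfolding nc_matching_def by blast

lemma nc_matchingI:
  assumes "\<And>e. e \<in> M \<Longrightarrow> \<exists>i j. e = {i, j} \<and> i < j \<and> i \<in> S \<and> j \<in> S"
    and "\<And>x. x \<in> S \<Longrightarrow> \<exists>e\<in>M. x \<in> e"
    and "\<And>e f x. e \<in> M \<Longrightarrow> f \<in> M \<Longrightarrow> x \<in> e \<Longrightarrow> x \<in> f \<Longrightarrow> e = f"
    and "\<And>e f. e \<in> M \<Longrightarrow> f \<in> M \<Longrightarrow> \<not> crosses e f"
  shows "nc_matching S M"
  unfolding nc_matching_def
proof (intro conjI ballI)
  fix x assume "x \<in> S"
  then obtain e where "e \<in> M" "x \<in> e"
    using assms(2) by blast
  then show "\<exists>!e. e \<in> M \<and> x \<in> e"
    using assms(3) by blast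
qed (use assms(1,4) in blast)+

lemma nc_matching_empty_iff: "nc_matching {} M \<longleftrightarrow> M = {}"
  unfolding nc_matching_def by auto

lemma nc_matching_doubleton_iff:
  assumes "a < b"
  shows "nc_matching {a, b} M \<longleftrightarrow> M = {{a, b}}"
proof
  assume M: "nc_matching {a, b} M"
  then obtain e where e: "e \<in> M" "a \<in> e"
    using nc_matching_covers by blast
  then have "e = {a, b}"
    using M assms by (auto elim!: nc_matching_edgeE)
  moreover have "f = e" if "f \<in> M" for f
    using M that e \<open>e = {a, b}\<close> by (auto elim!: nc_matching_edgeE)
  ultimately show "M = {{a, b}}"
    using e by blast
next
  assume "M = {{a, b}}"
  moreover have "\<not> crosses {a, b} {a, b}"
    using assms by (intro not_crosses_interval(1)[of _ a b]) auto
  ultimately show "nc_matching {a, b} M"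
    using assms by (intro nc_matchingI) auto
qed

lemma nc_matching_even_card:
  assumes "finite S" "nc_matching S M"
  shows "even (card S)"
proof -
  have "S = \<Union>M"
    using assms(2) nc_matching_edge_subset nc_matching_covers by blast
  moreover have "pairwise disjnt M"
    unfolding pairwise_def disjnt_def using nc_matching_unique[OF assms(2)] by blast
  moreover have "card e = 2" if "e \<in> M" for e
    using assms(2) that by (rule nc_matching_edge_card)
  moreover have "finite e" if "e \<in> M" for e
    using calculation(3)[OF that] by (simp add: card_ge_0_finite)
  ultimately have "card S = (\<Sum>e\<in>M. 2)"
    by (simp add: card_Union_disjoint)
  then show ?thesis
    by simp
qed

lemma nc_matching_union:
  assumes M: "nc_matching A M" and N: "nc_matching B N" and "A \<inter> B = {}"
    and nc: "\<And>e f. e \<in> M \<Longrightarrow> f \<in> N \<Longrightarrow> \<not> crosses e f"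
  shows "nc_matching (A \<union> B) (M \<union> N)"
proof (rule nc_matchingI)
  fix e assume "e \<in> M \<union> N"
  then show "\<exists>i j. e = {i, j} \<and> i < j \<and> i \<in> A \<union> B \<and> j \<in> A \<union> B"
    using nc_matching_edge[OF M] nc_matching_edge[OF N] by blast
next
  fix x assume "x \<in> A \<union> B"
  then show "\<exists>e\<in>M \<union> N. x \<in> e"
    using nc_matching_covers[OF M] nc_matching_covers[OF N] by blast
next
  fix e f x assume "e \<in> M \<union> N" "f \<in> M \<union> N" "x \<in> e" "x \<in> f"
  moreover have "e \<subseteq> A" if "e \<in> M" for e
    using M that by (rule nc_matching_edge_subset)
  moreover have "e \<subseteq> B" if "e \<in> N" for e
    using N that by (rule nc_matching_edge_subset)
  ultimately show "e = f"
    using nc_matching_unique[OF M] nc_matching_unique[OF N] \<open>A \<inter> B = {}\<close> by blast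
next
  fix e f assume "e \<in> M \<union> N" "f \<in> M \<union> N"
  then show "\<not> crosses e f"
    using nc nc_matching_noncrossing[OF M] nc_matching_noncrossing[OF N] crosses_sym by blast
qed

lemma nc_matching_union_restrict:
  assumes "nc_matching A M" "nc_matching B N" "A \<inter> B = {}"
  shows "{e \<in> M \<union> N. e \<subseteq> A} = M"
proof -
  have "\<not> e \<subseteq> A" if "e \<in> N" for e
    using nc_matching_edge_subset[OF assms(2) that] nc_matching_edge_nonempty[OF assms(2) that] assms(3)
    by blast
  then show ?thesis
    using nc_matching_edge_subset[OF assms(1)] by blast
qed

lemma nc_matching_split_edges:
  assumes "nc_matching (A \<union> B) M" "is_block A M"
  shows "{e \<in> M. e \<subseteq> A} \<union> {e \<in> M. e \<subseteq> B} = M"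
proof -
  have "e \<subseteq> A \<or> e \<subseteq> B" if "e \<in> M" for e
    using nc_matching_edge_subset[OF assms(1) that] assms(2) that unfolding is_block_def by blast
  then show ?thesis
    by blast
qed

lemma nc_matching_restrict:
  assumes M: "nc_matching S M" and "is_block A M"
  shows "nc_matching (S \<inter> A) {e \<in> M. e \<subseteq> A}"
proof (rule nc_matchingI)
  fix x assume "x \<in> S \<inter> A"
  then obtain e where "e \<in> M" "x \<in> e"
    using nc_matching_covers[OF M] by blast
  then show "\<exists>e\<in>{e \<in> M. e \<subseteq> A}. x \<in> e"
    using \<open>is_block A M\<close> \<open>x \<in> S \<inter> A\<close> unfolding is_block_def by blast
next
  fix e assume "e \<in> {e \<in> M. e \<subseteq> A}"
  then show "\<exists>i j. e = {i, j} \<and> i < j \<and> i \<in> S \<inter> A \<and> j \<in> S \<inter> A"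
    using nc_matching_edge[OF M] by blast
next
  fix e f x assume "e \<in> {e \<in> M. e \<subseteq> A}" "f \<in> {e \<in> M. e \<subseteq> A}" "x \<in> e" "x \<in> f"
  then show "e = f"
    using nc_matching_unique[OF M] by blast
next
  fix e f assume "e \<in> {e \<in> M. e \<subseteq> A}" "f \<in> {e \<in> M. e \<subseteq> A}"
  then show "\<not> crosses e f"
    using nc_matching_noncrossing[OF M] by blast
qed

lemma is_block_Un: "is_block A M \<Longrightarrow> is_block B M \<Longrightarrow> is_block (A \<union> B) M"
  unfolding is_block_def by blast

lemma is_block_Diff: "is_block A M \<Longrightarrow> is_block B M \<Longrightarrow> is_block (A - B) M"
  unfolding is_block_def by blast

lemma is_block_support: "nc_matching S M \<Longrightarrow> is_block S M"
  unfolding is_block_def using nc_matching_edge_subset by blast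

lemma is_block_edge: "nc_matching S M \<Longrightarrow> e \<in> M \<Longrightarrow> is_block e M"
  unfolding is_block_def using nc_matching_unique by blast

lemma is_block_under_edge:
  assumes M: "nc_matching S M" and ab: "{a, b} \<in> M" "a < b"
  shows "is_block {a<..<b} M"
  unfolding is_block_def
proof
  fix f assume f: "f \<in> M"
  then obtain c d where cd: "f = {c, d}" "c < d"
    using M by (blast elim: nc_matching_edgeE)
  have "f \<subseteq> {a..b} \<or> f \<inter> {a<..<b} = {}"
    using not_crosses_nested_or_apart[OF ab(2) cd(2)] nc_matching_noncrossing[OF M ab(1) f] cd(1)
    by simp
  moreover have "f \<subseteq> {a, b} \<or> f \<inter> {a, b} = {}"
    using is_block_edge[OF M ab(1)] f unfolding is_block_def by blast
  moreover have "{a..b} = {a<..<b} \<union> {a, b}"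
    using ab(2) by auto
  ultimately show "f \<subseteq> {a<..<b} \<or> f \<inter> {a<..<b} = {}"
    by auto
qed

lemma is_block_beyond_edge:
  assumes M: "nc_matching S M" and ab: "{a, b} \<in> M" "a < b" and "S \<subseteq> {a..}"
  shows "is_block (S \<inter> {b<..}) M"
proof -
  have "S \<inter> {b<..} = S - ({a<..<b} \<union> {a, b})"
    using assms(4) ab(2) by auto
  then show ?thesis
    using is_block_Diff[OF is_block_support[OF M] is_block_Un[OF is_block_under_edge[OF M ab]
          is_block_edge[OF M ab(1)]]] by simp
qed

lemma is_block_complement:
  assumes "nc_matching (A \<union> B) M" "is_block A M" "A \<inter> B = {}"
  shows "is_block B M"
proof -
  have "e \<subseteq> A \<or> e \<subseteq> B" if "e \<in> M" for e
    using nc_matching_split_edges[OF assms(1,2)] that by blast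
  then show ?thesis
    using assms(3) unfolding is_block_def by blast
qed

lemma is_block_even_card:
  assumes "nc_matching S M" "is_block X M" "finite X" "X \<subseteq> S"
  shows "even (card X)"
proof -
  have "S \<inter> X = X"
    using assms(4) by blast
  then have "nc_matching X {e \<in> M. e \<subseteq> X}"
    using nc_matching_restrict[OF assms(1,2)] by simp
  then show ?thesis
    by (rule nc_matching_even_card[OF assms(3)])
qed

text \<open>
  If some edge left \<open>X\<close> through \<open>q\<close>, removing its endpoint in \<open>X\<close> would leave a set
  of odd size that is still a union of edges.\<close>

lemma is_block_by_parity:
  assumes M: "nc_matching S M" and X: "finite X" "X \<subseteq> S" "q \<notin> X" "even (card X)"
    and closed: "\<And>e. e \<in> M \<Longrightarrow> e \<inter> X \<noteq> {} \<Longrightarrow> e \<subseteq> insert q X"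
  shows "is_block X M"
proof (rule ccontr)
  assume "\<not> is_block X M"
  then obtain e0 x0 where e0: "e0 \<in> M" "x0 \<in> e0" "x0 \<in> X" "\<not> e0 \<subseteq> X"
    unfolding is_block_def by blast
  then have "q \<in> e0"
    using closed by blast
  have "is_block (X - {x0}) M"
    unfolding is_block_def
  proof
    fix e assume e: "e \<in> M"
    show "e \<subseteq> X - {x0} \<or> e \<inter> (X - {x0}) = {}"
    proof (cases "e = e0")
      case True
      then obtain i j where "e0 = {i, j}"
        using M e0(1) by (blast elim: nc_matching_edgeE)
      then show ?thesis
        using True e0 \<open>q \<in> e0\<close> \<open>q \<notin> X\<close> by auto
    next
      case False
      then have "q \<notin> e" "x0 \<notin> e"
        using nc_matching_unique[OF M e e0(1)] \<open>q \<in> e0\<close> e0(2) by blast+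
      then show ?thesis
        using closed[OF e] by blast
    qed
  qed
  moreover have "finite (X - {x0})" "X - {x0} \<subseteq> S"
    using X(1,2) by auto
  ultimately have "even (card (X - {x0}))"
    by (rule is_block_even_card[OF M])
  then show False
    using e0(3) X(1,4) by (simp add: card_Diff_singleton card_gt_0_iff)
qed

text \<open>
  Non-crossing with an edge \<open>{a, b}\<close> of another matching lets an edge meeting the region
  cut off by \<open>{a, b}\<close> leave it only through \<open>b\<close>, which parity then rules out.\<close>

lemma is_block_under_compatible_edge:
  assumes M: "nc_matching S M" and ab: "a < b" and nc: "\<And>e. e \<in> M \<Longrightarrow> \<not> crosses {a, b} e"
    and a: "\<And>e. e \<in> M \<Longrightarrow> a \<in> e \<Longrightarrow> e \<inter> {a<..<b} = {}"
    and X: "{a<..<b} \<subseteq> S" "even (card {a<..<b})"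
  shows "is_block {a<..<b} M"
proof (rule is_block_by_parity[OF M finite_greaterThanLessThan X(1) _ X(2)])
  show "b \<notin> {a<..<b}"
    by simp
  fix e assume e: "e \<in> M" "e \<inter> {a<..<b} \<noteq> {}"
  obtain c d where cd: "e = {c, d}" "c < d"
    using nc_matching_edgeE[OF M e(1)] by blast
  have "e \<subseteq> {a..b}"
    using not_crosses_nested_or_apart[OF ab cd(2)] nc[OF e(1)] e(2) cd(1) by auto
  moreover have "a \<notin> e"
    using a[OF e(1)] e(2) by blast
  moreover have "{a..b} - {a} = insert b {a<..<b}"
    using ab by auto
  ultimately show "e \<subseteq> insert b {a<..<b}"
    by blast
qed

lemma is_block_beyond_compatible_edge:
  assumes M: "nc_matching S M" and ab: "a < b" and nc: "\<And>e. e \<in> M \<Longrightarrow> \<not> crosses {a, b} e"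
    and a: "\<And>e. e \<in> M \<Longrightarrow> a \<in> e \<Longrightarrow> e \<subseteq> {a..b}"
    and S: "finite S" "S \<subseteq> {a..}" and even: "even (card (S \<inter> {b<..}))"
  shows "is_block (S \<inter> {b<..}) M"
proof (rule is_block_by_parity[OF M _ _ _ even])
  show "finite (S \<inter> {b<..})" "S \<inter> {b<..} \<subseteq> S" "b \<notin> S \<inter> {b<..}"
    using S(1) by auto
  fix e assume e: "e \<in> M" "e \<inter> (S \<inter> {b<..}) \<noteq> {}"
  obtain c d where cd: "e = {c, d}" "c < d"
    using nc_matching_edgeE[OF M e(1)] by blast
  have "\<not> e \<subseteq> {a..b}"
    using e(2) by auto
  then have "e \<inter> {a<..<b} = {}" "a \<notin> e"
    using not_crosses_nested_or_apart[OF ab cd(2)] nc[OF e(1)] cd(1) a[OF e(1)] by auto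
  moreover have "e \<subseteq> S"
    using nc_matching_edge_subset[OF M e(1)] .
  moreover have "S - {a<..<b} - {a} \<subseteq> insert b (S \<inter> {b<..})"
    using S(2) by auto
  ultimately show "e \<subseteq> insert b (S \<inter> {b<..})"
    by blast
qed

lemma crosses_image:
  assumes g: "strict_mono_on D g" and D: "a \<in> D" "b \<in> D" "c \<in> D" "d \<in> D" and "a < b" "c < d"
  shows "crosses {g a, g b} {g c, g d} \<longleftrightarrow> crosses {a, b} {c, d}"
proof -
  have less: "g x < g y \<longleftrightarrow> x < y" if "x \<in> D" "y \<in> D" for x y
    using strict_mono_on_less[OF g that] .
  have "g a < g b" "g c < g d"
    using less D \<open>a < b\<close> \<open>c < d\<close> by blast+
  show ?thesis
    unfolding crosses_iff[OF \<open>a < b\<close> \<open>c < d\<close>] crosses_iff[OF \<open>g a < g b\<close> \<open>g c < g d\<close>]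
      less[OF D(1) D(3)] less[OF D(3) D(2)] less[OF D(2) D(4)]
      less[OF D(3) D(1)] less[OF D(1) D(4)] less[OF D(4) D(2)]
    by (rule refl)
qed

lemma crosses_image_edges:
  assumes g: "strict_mono_on D g" and M: "nc_matching S M" and N: "nc_matching T N"
    and "S \<subseteq> D" "T \<subseteq> D" and "e \<in> M" "f \<in> N"
  shows "crosses (g ` e) (g ` f) \<longleftrightarrow> crosses e f"
proof -
  obtain a b where ab: "e = {a, b}" "a < b" "a \<in> S" "b \<in> S"
    using nc_matching_edgeE[OF M \<open>e \<in> M\<close>] by blast
  obtain c d where cd: "f = {c, d}" "c < d" "c \<in> T" "d \<in> T"
    using nc_matching_edgeE[OF N \<open>f \<in> N\<close>] by blast
  have "g ` e = {g a, g b}" "g ` f = {g c, g d}"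
    using ab(1) cd(1) by simp_all
  moreover have "a \<in> D" "b \<in> D" "c \<in> D" "d \<in> D"
    using ab cd \<open>S \<subseteq> D\<close> \<open>T \<subseteq> D\<close> by blast+
  ultimately show ?thesis
    using crosses_image[OF g _ _ _ _ ab(2) cd(2)] ab(1) cd(1) by simp
qed

lemma nc_matching_image:
  assumes g: "strict_mono_on D g" and "S \<subseteq> D" and M: "nc_matching S M"
  shows "nc_matching (g ` S) ((`) g ` M)"
proof (rule nc_matchingI)
  fix e' assume "e' \<in> (`) g ` M"
  then obtain e where e: "e \<in> M" "e' = g ` e"
    by blast
  obtain i j where ij: "e = {i, j}" "i < j" "i \<in> S" "j \<in> S"
    using nc_matching_edgeE[OF M e(1)] by blast
  then have "g i < g j"
    using strict_mono_onD[OF g] \<open>S \<subseteq> D\<close> by blast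
  moreover have "e' = {g i, g j}"
    using e(2) ij(1) by simp
  ultimately show "\<exists>i j. e' = {i, j} \<and> i < j \<and> i \<in> g ` S \<and> j \<in> g ` S"
    using ij(3,4) by blast
next
  fix x assume "x \<in> g ` S"
  then obtain s where s: "s \<in> S" "x = g s"
    by blast
  then obtain e where "e \<in> M" "s \<in> e"
    using nc_matching_covers[OF M] by blast
  then show "\<exists>e\<in>(`) g ` M. x \<in> e"
    using s(2) by blast
next
  fix e' f' x assume e': "e' \<in> (`) g ` M" and f': "f' \<in> (`) g ` M" and x: "x \<in> e'" "x \<in> f'"
  obtain e where e: "e \<in> M" "e' = g ` e"
    using e' by blast
  obtain f where f: "f \<in> M" "f' = g ` f"
    using f' by blast
  obtain u where u: "u \<in> e" "x = g u"
    using x(1) e(2) by blast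
  obtain v where v: "v \<in> f" "x = g v"
    using x(2) f(2) by blast
  have "u \<in> D" "v \<in> D"
    using nc_matching_edge_subset[OF M e(1)] nc_matching_edge_subset[OF M f(1)] u(1) v(1)
      \<open>S \<subseteq> D\<close> by blast+
  then have "u = v"
    using inj_onD[OF strict_mono_on_imp_inj_on[OF g]] u(2) v(2) by simp
  then have "e = f"
    using nc_matching_unique[OF M e(1) f(1) u(1)] v(1) by simp
  then show "e' = f'"
    using e(2) f(2) by simp
next
  fix e' f' assume e': "e' \<in> (`) g ` M" and f': "f' \<in> (`) g ` M"
  obtain e where e: "e \<in> M" "e' = g ` e"
    using e' by blast
  obtain f where f: "f \<in> M" "f' = g ` f"
    using f' by blast
  show "\<not> crosses e' f'"
    using crosses_image_edges[OF g M M \<open>S \<subseteq> D\<close> \<open>S \<subseteq> D\<close> e(1) f(1)]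
      nc_matching_noncrossing[OF M e(1) f(1)] e(2) f(2) by simp
qed

section \<open>Counting pairs of disjoint compatible matchings\<close>

definition dc_pairs :: "nat set \<Rightarrow> nat set \<Rightarrow> (nat set set \<times> nat set set) set" where
  "dc_pairs S1 S2 = {(M, M'). nc_matching S1 M \<and> nc_matching S2 M' \<and> disjoint_compatible M M'}"

definition dc_fiber ::
    "nat set \<Rightarrow> nat set \<Rightarrow> nat set set \<Rightarrow> nat set set \<Rightarrow> (nat set set \<times> nat set set) set" where
  "dc_fiber S1 S2 E E' = {p \<in> dc_pairs S1 S2. E \<subseteq> fst p \<and> E' \<subseteq> snd p}"

lemma disjoint_compatible_sym: "disjoint_compatible M M' \<longleftrightarrow> disjoint_compatible M' M"
  unfolding disjoint_compatible_def using crosses_sym by blast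

lemma disjoint_compatible_mono:
  "disjoint_compatible M M' \<Longrightarrow> N \<subseteq> M \<Longrightarrow> N' \<subseteq> M' \<Longrightarrow> disjoint_compatible N N'"
  unfolding disjoint_compatible_def by blast

lemma disjoint_compatible_Un:
  "disjoint_compatible M1 M1' \<Longrightarrow> disjoint_compatible M2 M2' \<Longrightarrow>
   disjoint_compatible M1 M2' \<Longrightarrow> disjoint_compatible M2 M1' \<Longrightarrow>
   disjoint_compatible (M1 \<union> M2) (M1' \<union> M2')"
  unfolding disjoint_compatible_def by blast

lemma disjoint_compatible_if_separated:
  assumes M: "nc_matching A M" and N: "nc_matching B N" and "finite A" and "card (A \<inter> B) < 2"
    and nc: "\<And>e f. e \<subseteq> A \<Longrightarrow> f \<subseteq> B \<Longrightarrow> \<not> crosses e f"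
  shows "disjoint_compatible M N"
  unfolding disjoint_compatible_def
proof (intro conjI ballI)
  show "M \<inter> N = {}"
  proof (rule ccontr)
    assume "M \<inter> N \<noteq> {}"
    then obtain e where "e \<in> M" "e \<in> N"
      by blast
    then have "e \<subseteq> A \<inter> B" "card e = 2"
      using M N nc_matching_edge_subset nc_matching_edge_card by blast+
    then have "card e \<le> card (A \<inter> B)"
      using \<open>finite A\<close> by (intro card_mono) auto
    with \<open>card e = 2\<close> \<open>card (A \<inter> B) < 2\<close> show False
      by simp
  qed
next
  fix e f assume "e \<in> M" "f \<in> N"
  then show "\<not> crosses e f"
    using nc M N nc_matching_edge_subset by blast
qed

lemma dc_pairs_iff:
  "(M, M') \<in> dc_pairs S1 S2 \<longleftrightarrow> nc_matching S1 M \<and> nc_matching S2 M' \<and> disjoint_compatible M M'"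
  unfolding dc_pairs_def by simp

lemma dc_fiber_iff:
  "(M, M') \<in> dc_fiber S1 S2 E E' \<longleftrightarrow>
     nc_matching S1 M \<and> nc_matching S2 M' \<and> disjoint_compatible M M' \<and> E \<subseteq> M \<and> E' \<subseteq> M'"
  unfolding dc_fiber_def dc_pairs_def by auto

lemma dc_fiber_empty_edges: "dc_fiber S1 S2 {} {} = dc_pairs S1 S2"
  unfolding dc_fiber_def by simp

lemma dc_pairs_empty: "dc_pairs {} {} = {({}, {})}"
proof -
  have "(M, M') \<in> dc_pairs {} {} \<longleftrightarrow> M = {} \<and> M' = {}" for M M'
    unfolding dc_pairs_iff nc_matching_empty_iff
    by (intro iffI; elim conjE; simp add: disjoint_compatible_def)
  then show ?thesis
    by (intro set_eqI) (metis prod.collapse singleton_iff)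
qed

lemma finite_dc_pairs: "finite S1 \<Longrightarrow> finite S2 \<Longrightarrow> finite (dc_pairs S1 S2)"
proof -
  assume "finite S1" "finite S2"
  moreover have "dc_pairs S1 S2 \<subseteq> Pow (Pow S1) \<times> Pow (Pow S2)"
    unfolding dc_pairs_def using nc_matching_edge_subset by blast
  ultimately show ?thesis
    by (meson finite_Pow_iff finite_SigmaI finite_subset)
qed

lemma finite_dc_fiber: "finite S1 \<Longrightarrow> finite S2 \<Longrightarrow> finite (dc_fiber S1 S2 E E')"
  unfolding dc_fiber_def by (simp add: finite_dc_pairs)

lemma card_dc_fiber_swap: "card (dc_fiber S2 S1 E' E) = card (dc_fiber S1 S2 E E')"
proof -
  have swap: "prod.swap p \<in> dc_fiber S2 S1 E' E \<longleftrightarrow> p \<in> dc_fiber S1 S2 E E'" for p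
    using disjoint_compatible_sym[of "fst p" "snd p"] by (cases p) (auto simp: dc_fiber_iff)
  have "bij_betw prod.swap (dc_fiber S1 S2 E E') (dc_fiber S2 S1 E' E)"
    by (rule bij_betw_byWitness[where f' = prod.swap]) (use swap in auto)
  then show ?thesis
    by (simp add: bij_betw_same_card)
qed

lemma dc_fiber_doubleton_empty:
  assumes "a < b"
  shows "dc_fiber {a, b} {} {{a, b}} {} = {({{a, b}}, {})}"
proof -
  have "(M, M') \<in> dc_fiber {a, b} {} {{a, b}} {} \<longleftrightarrow> M = {{a, b}} \<and> M' = {}" for M M'
    using assms unfolding dc_fiber_iff nc_matching_doubleton_iff[OF assms] nc_matching_empty_iff
    by (intro iffI; elim conjE; simp add: disjoint_compatible_def)
  then show ?thesis
    by (intro set_eqI) (metis prod.collapse singleton_iff)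
qed

lemma dc_fiber_doubletons:
  assumes "a < b" "a < c" "b \<noteq> c"
  shows "dc_fiber {a, b} {a, c} {{a, b}} {{a, c}} = {({{a, b}}, {{a, c}})}"
proof -
  have "disjoint_compatible {{a, b}} {{a, c}}"
    using assms by (simp add: disjoint_compatible_def crosses_iff doubleton_eq_iff)
  then have "(M, M') \<in> dc_fiber {a, b} {a, c} {{a, b}} {{a, c}} \<longleftrightarrow> M = {{a, b}} \<and> M' = {{a, c}}" for M M'
    unfolding dc_fiber_iff nc_matching_doubleton_iff[OF assms(1)] nc_matching_doubleton_iff[OF assms(2)]
    by (intro iffI; elim conjE; simp)
  then show ?thesis
    by (intro set_eqI) (metis prod.collapse singleton_iff)
qed

lemma card_dc_fiber_partner:
  assumes fin: "finite S1" "finite S2" and a: "a \<in> S1"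
  shows "card (dc_fiber S1 S2 E E') = (\<Sum>y\<in>S1 - {a}. card (dc_fiber S1 S2 (insert {a, y} E) E'))"
proof -
  have fiber_y: "dc_fiber S1 S2 (insert {a, y} E) E' = {p \<in> dc_fiber S1 S2 E E'. {a, y} \<in> fst p}" for y
    unfolding dc_fiber_def by blast
  have "dc_fiber S1 S2 E E' = (\<Union>y\<in>S1 - {a}. dc_fiber S1 S2 (insert {a, y} E) E')"
  proof (intro equalityI subsetI)
    fix p assume p: "p \<in> dc_fiber S1 S2 E E'"
    then have M: "nc_matching S1 (fst p)"
      by (simp add: dc_fiber_def dc_pairs_def case_prod_beta)
    obtain e where e: "e \<in> fst p" "a \<in> e"
      using nc_matching_covers[OF M a] by blast
    obtain i j where "e = {i, j}" "i < j" "i \<in> S1" "j \<in> S1"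
      using nc_matching_edgeE[OF M e(1)] by blast
    with e have "\<exists>y\<in>S1 - {a}. {a, y} \<in> fst p"
      by (metis Diff_iff insert_commute insertE less_irrefl singleton_iff)
    then show "p \<in> (\<Union>y\<in>S1 - {a}. dc_fiber S1 S2 (insert {a, y} E) E')"
      using p fiber_y by blast
  qed (use fiber_y in blast)
  also have "card \<dots> = (\<Sum>y\<in>S1 - {a}. card (dc_fiber S1 S2 (insert {a, y} E) E'))"
  proof (rule card_UN_disjoint)
    show "finite (S1 - {a})" "\<forall>y\<in>S1 - {a}. finite (dc_fiber S1 S2 (insert {a, y} E) E')"
      using fin finite_dc_fiber by blast+
    show "\<forall>y\<in>S1 - {a}. \<forall>z\<in>S1 - {a}. y \<noteq> z \<longrightarrow>
        dc_fiber S1 S2 (insert {a, y} E) E' \<inter> dc_fiber S1 S2 (insert {a, z} E) E' = {}"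
    proof (intro ballI impI equals0I)
      fix y z p
      assume "y \<in> S1 - {a}" "z \<in> S1 - {a}" "y \<noteq> z"
        and p: "p \<in> dc_fiber S1 S2 (insert {a, y} E) E' \<inter> dc_fiber S1 S2 (insert {a, z} E) E'"
      then have "{a, y} \<noteq> {a, z}"
        by (auto simp: doubleton_eq_iff)
      moreover have "nc_matching S1 (fst p)" "{a, y} \<in> fst p" "{a, z} \<in> fst p"
        using p by (auto simp: dc_fiber_def dc_pairs_def)
      ultimately show False
        using nc_matching_unique[of S1 "fst p" "{a, y}" "{a, z}" a] by blast
    qed
  qed
  finally show ?thesis .
qed

lemma card_dc_fiber_partner_snd:
  assumes "finite S1" "finite S2" "a \<in> S2"
  shows "card (dc_fiber S1 S2 E E') = (\<Sum>y\<in>S2 - {a}. card (dc_fiber S1 S2 E (insert {a, y} E')))"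
  using card_dc_fiber_partner[OF assms(2,1,3), of E' E] by (simp add: card_dc_fiber_swap)

lemma dc_pairs_glue:
  assumes fin: "finite A1" "finite B1" and disj: "A1 \<inter> B1 = {}" "A2 \<inter> B2 = {}"
    and thin: "card (A1 \<inter> B2) < 2" "card (A2 \<inter> B1) < 2"
    and nc: "\<And>e f. e \<subseteq> A1 \<union> A2 \<Longrightarrow> f \<subseteq> B1 \<union> B2 \<Longrightarrow> \<not> crosses e f"
    and p1: "(M1, M1') \<in> dc_pairs A1 A2" and p2: "(M2, M2') \<in> dc_fiber B1 B2 E E'"
  shows "(M1 \<union> M2, M1' \<union> M2') \<in> dc_fiber (A1 \<union> B1) (A2 \<union> B2) E E'"
proof -
  have M1: "nc_matching A1 M1" and M1': "nc_matching A2 M1'"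
    and M2: "nc_matching B1 M2" and M2': "nc_matching B2 M2'"
    and dc1: "disjoint_compatible M1 M1'" and dc2: "disjoint_compatible M2 M2'"
    and "E \<subseteq> M2" "E' \<subseteq> M2'"
    using p1 p2 by (simp_all add: dc_pairs_iff dc_fiber_iff)
  have A: "e \<subseteq> A1 \<union> A2" if "e \<in> M1 \<union> M1'" for e
    using that nc_matching_edge_subset[OF M1] nc_matching_edge_subset[OF M1'] by blast
  have B: "f \<subseteq> B1 \<union> B2" if "f \<in> M2 \<union> M2'" for f
    using that nc_matching_edge_subset[OF M2] nc_matching_edge_subset[OF M2'] by blast
  have nc_edges: "\<not> crosses e f" if "e \<in> M1 \<union> M1'" "f \<in> M2 \<union> M2'" for e f
    using nc[OF A[OF that(1)] B[OF that(2)]] .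
  have nc': "\<not> crosses e f" if "e \<subseteq> B1" "f \<subseteq> A2" for e f
    using nc[of f e] that crosses_sym[of e f] by auto
  have "nc_matching (A1 \<union> B1) (M1 \<union> M2)"
    by (rule nc_matching_union[OF M1 M2 disj(1)]) (rule nc_edges; simp)
  moreover have "nc_matching (A2 \<union> B2) (M1' \<union> M2')"
    by (rule nc_matching_union[OF M1' M2' disj(2)]) (rule nc_edges; simp)
  moreover have "disjoint_compatible M1 M2'"
    by (rule disjoint_compatible_if_separated[OF M1 M2' fin(1) thin(1)]) (rule nc; auto)
  moreover have "disjoint_compatible M2 M1'"
    using disjoint_compatible_if_separated[OF M2 M1' fin(2) _ nc'] thin(2)
    by (simp add: Int_commute)
  ultimately show ?thesis
    using disjoint_compatible_Un[OF dc1 dc2] \<open>E \<subseteq> M2\<close> \<open>E' \<subseteq> M2'\<close>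
    by (auto simp: dc_fiber_iff)
qed

lemma dc_fiber_cut:
  assumes disj: "A1 \<inter> B1 = {}" "A2 \<inter> B2 = {}" and E: "\<Union>E \<subseteq> B1" "\<Union>E' \<subseteq> B2"
    and p: "(M, M') \<in> dc_fiber (A1 \<union> B1) (A2 \<union> B2) E E'"
    and A: "is_block A1 M" "is_block A2 M'"
  shows "({e \<in> M. e \<subseteq> A1}, {e \<in> M'. e \<subseteq> A2}) \<in> dc_pairs A1 A2"
    and "({e \<in> M. e \<subseteq> B1}, {e \<in> M'. e \<subseteq> B2}) \<in> dc_fiber B1 B2 E E'"
proof -
  have M: "nc_matching (A1 \<union> B1) M" and M': "nc_matching (A2 \<union> B2) M'"
    and dc: "disjoint_compatible M M'" and "E \<subseteq> M" "E' \<subseteq> M'"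
    using p by (simp_all add: dc_fiber_iff)
  have B: "is_block B1 M" "is_block B2 M'"
    using is_block_complement[OF M A(1) disj(1)] is_block_complement[OF M' A(2) disj(2)] .
  have "nc_matching A1 {e \<in> M. e \<subseteq> A1}" "nc_matching A2 {e \<in> M'. e \<subseteq> A2}"
    using nc_matching_restrict[OF M A(1)] nc_matching_restrict[OF M' A(2)]
    by (simp_all add: Int_absorb1)
  moreover have "nc_matching B1 {e \<in> M. e \<subseteq> B1}" "nc_matching B2 {e \<in> M'. e \<subseteq> B2}"
    using nc_matching_restrict[OF M B(1)] nc_matching_restrict[OF M' B(2)]
    by (simp_all add: Int_absorb1)
  moreover have "E \<subseteq> {e \<in> M. e \<subseteq> B1}" "E' \<subseteq> {e \<in> M'. e \<subseteq> B2}"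
    using E \<open>E \<subseteq> M\<close> \<open>E' \<subseteq> M'\<close> by blast+
  moreover have "disjoint_compatible {e \<in> M. e \<subseteq> A1} {e \<in> M'. e \<subseteq> A2}"
    "disjoint_compatible {e \<in> M. e \<subseteq> B1} {e \<in> M'. e \<subseteq> B2}"
    by (rule disjoint_compatible_mono[OF dc]; blast)+
  ultimately show "({e \<in> M. e \<subseteq> A1}, {e \<in> M'. e \<subseteq> A2}) \<in> dc_pairs A1 A2"
    "({e \<in> M. e \<subseteq> B1}, {e \<in> M'. e \<subseteq> B2}) \<in> dc_fiber B1 B2 E E'"
    by (simp_all add: dc_pairs_iff dc_fiber_iff)
qed

text \<open>
  The blocks of the two matchings may share a point but not an edge, which is what the
  cardinality hypotheses express.\<close>

lemma card_dc_fiber_split: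
  assumes fin: "finite A1" "finite A2" "finite B1" "finite B2"
    and disj: "A1 \<inter> B1 = {}" "A2 \<inter> B2 = {}"
    and thin: "card (A1 \<inter> B2) < 2" "card (A2 \<inter> B1) < 2"
    and nc: "\<And>e f. e \<subseteq> A1 \<union> A2 \<Longrightarrow> f \<subseteq> B1 \<union> B2 \<Longrightarrow> \<not> crosses e f"
    and E: "\<Union>E \<subseteq> B1" "\<Union>E' \<subseteq> B2"
    and blocks: "\<And>M M'. (M, M') \<in> dc_fiber (A1 \<union> B1) (A2 \<union> B2) E E' \<Longrightarrow>
                   is_block A1 M \<and> is_block A2 M'"
  shows "card (dc_fiber (A1 \<union> B1) (A2 \<union> B2) E E') = card (dc_pairs A1 A2) * card (dc_fiber B1 B2 E E')"
proof -
  define glue where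
    "glue = (\<lambda>((M1 :: nat set set, M1'), (M2, M2')). (M1 \<union> M2, M1' \<union> M2' :: nat set set))"
  define cut where "cut = (\<lambda>(M, M'). (({e \<in> M. e \<subseteq> A1}, {e \<in> M'. e \<subseteq> A2}),
                                       ({e \<in> M. e \<subseteq> B1}, {e \<in> M'. e \<subseteq> B2})))"
  have "bij_betw glue (dc_pairs A1 A2 \<times> dc_fiber B1 B2 E E') (dc_fiber (A1 \<union> B1) (A2 \<union> B2) E E')"
  proof (rule bij_betw_byWitness[where f' = cut])
    show "\<forall>q \<in> dc_pairs A1 A2 \<times> dc_fiber B1 B2 E E'. cut (glue q) = q"
    proof (clarsimp simp: dc_pairs_iff dc_fiber_iff)
      fix M1 M1' M2 M2'
      assume "nc_matching A1 M1" "nc_matching A2 M1'" "nc_matching B1 M2" "nc_matching B2 M2'"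
      then show "cut (glue ((M1, M1'), M2, M2')) = ((M1, M1'), M2, M2')"
        using nc_matching_union_restrict[of A1 M1 B1 M2] nc_matching_union_restrict[of B1 M2 A1 M1]
          nc_matching_union_restrict[of A2 M1' B2 M2'] nc_matching_union_restrict[of B2 M2' A2 M1']
          disj unfolding cut_def glue_def by (simp add: Un_commute Int_commute)
    qed
    show "\<forall>p \<in> dc_fiber (A1 \<union> B1) (A2 \<union> B2) E E'. glue (cut p) = p"
    proof (intro ballI)
      fix p assume p: "p \<in> dc_fiber (A1 \<union> B1) (A2 \<union> B2) E E'"
      obtain M M' where [simp]: "p = (M, M')"
        by fastforce
      have "nc_matching (A1 \<union> B1) M" "nc_matching (A2 \<union> B2) M'"
        using p by (simp_all add: dc_fiber_iff)
      then have "{e \<in> M. e \<subseteq> A1} \<union> {e \<in> M. e \<subseteq> B1} = M"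
        "{e \<in> M'. e \<subseteq> A2} \<union> {e \<in> M'. e \<subseteq> B2} = M'"
        using blocks p by (simp_all add: nc_matching_split_edges)
      then show "glue (cut p) = p"
        unfolding glue_def cut_def by simp
    qed
    show "cut ` dc_fiber (A1 \<union> B1) (A2 \<union> B2) E E' \<subseteq> dc_pairs A1 A2 \<times> dc_fiber B1 B2 E E'"
    proof (intro image_subsetI)
      fix p assume p: "p \<in> dc_fiber (A1 \<union> B1) (A2 \<union> B2) E E'"
      obtain M M' where [simp]: "p = (M, M')"
        by fastforce
      show "cut p \<in> dc_pairs A1 A2 \<times> dc_fiber B1 B2 E E'"
        using dc_fiber_cut[OF disj E] blocks p unfolding cut_def by simp
    qed
    show "glue ` (dc_pairs A1 A2 \<times> dc_fiber B1 B2 E E') \<subseteq> dc_fiber (A1 \<union> B1) (A2 \<union> B2) E E'"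
    proof (intro image_subsetI)
      fix q assume q: "q \<in> dc_pairs A1 A2 \<times> dc_fiber B1 B2 E E'"
      obtain M1 M1' M2 M2' where [simp]: "q = ((M1, M1'), (M2, M2'))"
        by (cases q) auto
      show "glue q \<in> dc_fiber (A1 \<union> B1) (A2 \<union> B2) E E'"
        using dc_pairs_glue[OF fin(1,3) disj thin nc] q unfolding glue_def by simp
    qed
  qed
  then have "card (dc_pairs A1 A2 \<times> dc_fiber B1 B2 E E') = card (dc_fiber (A1 \<union> B1) (A2 \<union> B2) E E')"
    by (rule bij_betw_same_card)
  then show ?thesis
    by (simp add: card_cartesian_product)
qed

lemma card_dc_fiber_split_interval:
  assumes fin: "finite A1" "finite A2" "finite B1" "finite B2"
    and A: "A1 \<union> A2 \<subseteq> {l..h}" and B: "(B1 \<union> B2) \<inter> {l<..<h} = {}"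
    and AB: "(A1 \<union> A2) \<inter> (B1 \<union> B2) = {}"
    and E: "\<Union>E \<subseteq> B1" "\<Union>E' \<subseteq> B2"
    and blocks: "\<And>M M'. (M, M') \<in> dc_fiber (A1 \<union> B1) (A2 \<union> B2) E E' \<Longrightarrow>
                   is_block A1 M \<and> is_block A2 M'"
  shows "card (dc_fiber (A1 \<union> B1) (A2 \<union> B2) E E') = card (dc_pairs A1 A2) * card (dc_fiber B1 B2 E E')"
proof (rule card_dc_fiber_split[OF fin _ _ _ _ _ E blocks])
  show "A1 \<inter> B1 = {}" "A2 \<inter> B2 = {}"
    using AB by blast+
  have "A1 \<inter> B2 = {}" "A2 \<inter> B1 = {}"
    using AB by blast+
  then show "card (A1 \<inter> B2) < 2" "card (A2 \<inter> B1) < 2"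
    by simp_all
  show "\<not> crosses e f" if "e \<subseteq> A1 \<union> A2" "f \<subseteq> B1 \<union> B2" for e f
  proof (rule not_crosses_interval(1))
    show "e \<subseteq> {l..h}" "f \<inter> {l<..<h} = {}"
      using that A B by blast+
  qed
qed

lemma dc_pairs_image:
  assumes g: "strict_mono_on D g" and S: "S1 \<subseteq> D" "S2 \<subseteq> D" and p: "(M, M') \<in> dc_pairs S1 S2"
  shows "((`) g ` M, (`) g ` M') \<in> dc_pairs (g ` S1) (g ` S2)"
proof -
  have M: "nc_matching S1 M" and M': "nc_matching S2 M'" and dc: "disjoint_compatible M M'"
    using p by (simp_all add: dc_pairs_iff)
  have "(`) g ` M \<inter> (`) g ` M' = {}"
  proof (intro equals0I)
    fix e' assume "e' \<in> (`) g ` M \<inter> (`) g ` M'"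
    then obtain e f where "e \<in> M" "f \<in> M'" "g ` e = g ` f"
      by blast
    moreover have "e \<in> Pow D" "f \<in> Pow D"
      using nc_matching_edge_subset[OF M \<open>e \<in> M\<close>] nc_matching_edge_subset[OF M' \<open>f \<in> M'\<close>] S
      by auto
    ultimately have "e = f"
      using inj_onD[OF inj_on_image_Pow[OF strict_mono_on_imp_inj_on[OF g]]] by blast
    with \<open>e \<in> M\<close> \<open>f \<in> M'\<close> have "e \<in> M \<inter> M'"
      by simp
    then show False
      using dc unfolding disjoint_compatible_def by blast
  qed
  moreover have "\<not> crosses e' f'" if e': "e' \<in> (`) g ` M" and f': "f' \<in> (`) g ` M'" for e' f'
  proof -
    obtain e f where "e \<in> M" "f \<in> M'" "e' = g ` e" "f' = g ` f"
      using e' f' by blast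
    then show ?thesis
      using crosses_image_edges[OF g M M' S] dc unfolding disjoint_compatible_def by simp
  qed
  ultimately show ?thesis
    using nc_matching_image[OF g S(1) M] nc_matching_image[OF g S(2) M']
    by (simp add: dc_pairs_iff disjoint_compatible_def)
qed

lemma card_dc_pairs_image_le:
  assumes g: "strict_mono_on D g" and S: "S1 \<subseteq> D" "S2 \<subseteq> D" and fin: "finite S1" "finite S2"
  shows "card (dc_pairs S1 S2) \<le> card (dc_pairs (g ` S1) (g ` S2))"
proof -
  define G where "G = (\<lambda>(M, M'). ((`) ((`) g) M, (`) ((`) g) M'))"
  have inj: "inj_on ((`) ((`) g)) (Pow (Pow D))"
    using inj_on_image_Pow[OF inj_on_image_Pow[OF strict_mono_on_imp_inj_on[OF g]]] .
  have Pow: "fst p \<in> Pow (Pow D)" "snd p \<in> Pow (Pow D)" if "p \<in> dc_pairs S1 S2" for p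
  proof -
    have "nc_matching S1 (fst p)" "nc_matching S2 (snd p)"
      using that by (simp_all add: dc_pairs_def case_prod_beta)
    then show "fst p \<in> Pow (Pow D)" "snd p \<in> Pow (Pow D)"
      using nc_matching_edge_subset S by blast+
  qed
  have "inj_on G (dc_pairs S1 S2)"
  proof (rule inj_onI)
    fix p q assume p: "p \<in> dc_pairs S1 S2" and q: "q \<in> dc_pairs S1 S2" and "G p = G q"
    then have eq: "(`) ((`) g) (fst p) = (`) ((`) g) (fst q)" "(`) ((`) g) (snd p) = (`) ((`) g) (snd q)"
      unfolding G_def by (simp_all add: case_prod_beta)
    have "fst p = fst q" "snd p = snd q"
      using inj_onD[OF inj eq(1) Pow(1)[OF p] Pow(1)[OF q]] inj_onD[OF inj eq(2) Pow(2)[OF p] Pow(2)[OF q]] .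
    then show "p = q"
      by (simp add: prod_eq_iff)
  qed
  moreover have "G ` dc_pairs S1 S2 \<subseteq> dc_pairs (g ` S1) (g ` S2)"
  proof (intro image_subsetI)
    fix p assume p: "p \<in> dc_pairs S1 S2"
    obtain M M' where [simp]: "p = (M, M')"
      by fastforce
    show "G p \<in> dc_pairs (g ` S1) (g ` S2)"
      using dc_pairs_image[OF g S] p unfolding G_def by simp
  qed
  moreover have "finite (dc_pairs (g ` S1) (g ` S2))"
    using finite_dc_pairs fin by simp
  ultimately show ?thesis
    by (rule card_inj_on_le)
qed

lemma card_dc_pairs_shift:
  assumes "finite S1" "finite S2"
  shows "card (dc_pairs ((+) c ` S1) ((+) c ` S2)) = card (dc_pairs S1 S2)"
proof (rule antisym)
  have unshift: "(\<lambda>x. x - c) ` (+) c ` S = S" for S :: "nat set"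
    by (simp add: image_image)
  have "strict_mono_on {c..} (\<lambda>x. x - c)"
    by (rule strict_mono_onI) auto
  moreover have "(+) c ` S1 \<subseteq> {c..}" "(+) c ` S2 \<subseteq> {c..}"
    by auto
  ultimately have "card (dc_pairs ((+) c ` S1) ((+) c ` S2))
      \<le> card (dc_pairs ((\<lambda>x. x - c) ` (+) c ` S1) ((\<lambda>x. x - c) ` (+) c ` S2))"
    using assms by (intro card_dc_pairs_image_le) simp_all
  then show "card (dc_pairs ((+) c ` S1) ((+) c ` S2)) \<le> card (dc_pairs S1 S2)"
    unfolding unshift .
  have "strict_mono_on UNIV ((+) c)"
    by (rule strict_mono_onI) simp
  then show "card (dc_pairs S1 S2) \<le> card (dc_pairs ((+) c ` S1) ((+) c ` S2))"
    using assms by (intro card_dc_pairs_image_le[where D = UNIV]) simp_all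
qed

lemma card_dc_pairs_interval_shift:
  "card (dc_pairs {l1 + c..<h1 + c} {l2 + c..<h2 + c}) = card (dc_pairs {l1..<h1} {l2..<h2})"
  using card_dc_pairs_shift[of "{l1..<h1}" "{l2..<h2}" c] by simp

lemma card_dc_fiber_left_edge:
  assumes ay: "a < y" and fin: "finite R1" "finite R2" and R: "R1 \<subseteq> {y<..}" "R2 \<subseteq> {y..}"
  shows "card (dc_fiber ({a, y} \<union> R1) R2 {{a, y}} {}) = card (dc_pairs R1 R2)"
proof -
  have "card (dc_fiber (R1 \<union> {a, y}) (R2 \<union> {}) {{a, y}} {})
      = card (dc_pairs R1 R2) * card (dc_fiber {a, y} {} {{a, y}} {})"
  proof (rule card_dc_fiber_split)
    show "finite R1" "finite R2" "finite {a, y}" "finite {}"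
      using fin by simp_all
    show "R1 \<inter> {a, y} = {}" "R2 \<inter> {} = {}" "card (R1 \<inter> {}) < 2"
      using R ay by auto
    have "card (R2 \<inter> {a, y}) \<le> card {y}"
      using R ay by (intro card_mono) auto
    then show "card (R2 \<inter> {a, y}) < 2"
      by simp
    show "\<not> crosses e f" if "e \<subseteq> R1 \<union> R2" "f \<subseteq> {a, y} \<union> {}" for e f
    proof (rule not_crosses_sides(2))
      show "f \<subseteq> {..y}"
        using that(2) ay by auto
      have "R1 \<union> R2 \<subseteq> {y..}"
        using R by auto
      then show "e \<subseteq> {y..}"
        using that(1) by blast
    qed
    show "\<Union>{{a, y}} \<subseteq> {a, y}" "\<Union>{} \<subseteq> {}"
      by simp_all
  next
    fix M M' assume "(M, M') \<in> dc_fiber (R1 \<union> {a, y}) (R2 \<union> {}) {{a, y}} {}"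
    then have M: "nc_matching ({a, y} \<union> R1) M" and M': "nc_matching R2 M'" and "{a, y} \<in> M"
      by (simp_all add: dc_fiber_iff Un_commute)
    have "is_block R1 M"
      using is_block_complement[OF M is_block_edge[OF M \<open>{a, y} \<in> M\<close>]] R ay by force
    then show "is_block R1 M \<and> is_block R2 M'"
      using is_block_support[OF M'] by blast
  qed
  then show ?thesis
    using dc_fiber_doubleton_empty[OF ay] by (simp add: Un_commute)
qed

lemma card_dc_fiber_first_edge:
  assumes ay: "a < y" and fin: "finite R1" "finite R2" and R: "R1 \<subseteq> {y<..}" "R2 \<subseteq> {y..}"
  shows "card (dc_fiber ({a..y} \<union> R1) ({a<..<y} \<union> R2) {{a, y}} {})
       = card (dc_pairs {a<..<y} {a<..<y}) * card (dc_pairs R1 R2)"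
proof -
  define X where "X = {a<..<y}"
  have split: "card (dc_fiber (X \<union> ({a, y} \<union> R1)) (X \<union> R2) {{a, y}} {})
      = card (dc_pairs X X) * card (dc_fiber ({a, y} \<union> R1) R2 {{a, y}} {})"
  proof (rule card_dc_fiber_split_interval[where l = a and h = y])
    show "finite X" "finite X" "finite ({a, y} \<union> R1)" "finite R2"
      using fin unfolding X_def by simp_all
    show "X \<union> X \<subseteq> {a..y}" "({a, y} \<union> R1 \<union> R2) \<inter> {a<..<y} = {}"
      "(X \<union> X) \<inter> ({a, y} \<union> R1 \<union> R2) = {}"
      using R unfolding X_def by auto
    show "\<Union>{{a, y}} \<subseteq> {a, y} \<union> R1" "\<Union>{} \<subseteq> R2"
      by simp_all
  next
    fix M M' assume "(M, M') \<in> dc_fiber (X \<union> ({a, y} \<union> R1)) (X \<union> R2) {{a, y}} {}"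
    then have M: "nc_matching (X \<union> ({a, y} \<union> R1)) M" and M': "nc_matching (X \<union> R2) M'"
      and dc: "disjoint_compatible M M'" and ay_M: "{a, y} \<in> M"
      by (simp_all add: dc_fiber_iff)
    have "is_block X M"
      unfolding X_def by (rule is_block_under_edge[OF M ay_M ay])
    moreover have "is_block X M'"
      unfolding X_def
    proof (rule is_block_under_compatible_edge[OF M' ay])
      show "\<not> crosses {a, y} e" if "e \<in> M'" for e
        using dc ay_M that unfolding disjoint_compatible_def by blast
      have "a \<notin> X \<union> R2"
        using R ay unfolding X_def by auto
      then show "e \<inter> {a<..<y} = {}" if "e \<in> M'" "a \<in> e" for e
        using nc_matching_edge_subset[OF M' that(1)] that(2) by blast
      have "even (card X)"
        by (rule is_block_even_card[OF M \<open>is_block X M\<close>]) (auto simp: X_def)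
      then show "{a<..<y} \<subseteq> X \<union> R2" "even (card {a<..<y})"
        unfolding X_def by auto
    qed
    ultimately show "is_block X M \<and> is_block X M'" ..
  qed
  have "{a..y} \<union> R1 = X \<union> ({a, y} \<union> R1)" "{a<..<y} \<union> R2 = X \<union> R2"
    using ay unfolding X_def by auto
  then show ?thesis
    unfolding X_def[symmetric] using split card_dc_fiber_left_edge[OF ay fin R] by simp
qed

lemma card_dc_fiber_first_edges_inner:
  assumes j: "a < j1" "j1 < j2" "j2 \<le> n"
  shows "card (dc_fiber {a..n} {a..n} {{a, j1}} {{a, j2}})
       = card (dc_pairs {a<..<j1} {a<..<j1}) * card (dc_fiber (insert a {j1..n}) (insert a {j1..n}) {{a, j1}} {{a, j2}})"
proof -
  define X where "X = {a<..<j1}"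
  define R where "R = insert a {j1..n}"
  have "card (dc_fiber (X \<union> R) (X \<union> R) {{a, j1}} {{a, j2}})
      = card (dc_pairs X X) * card (dc_fiber R R {{a, j1}} {{a, j2}})"
  proof (rule card_dc_fiber_split_interval[where l = a and h = j1])
    show "finite X" "finite X" "finite R" "finite R"
      unfolding X_def R_def by simp_all
    show "X \<union> X \<subseteq> {a..j1}" "(R \<union> R) \<inter> {a<..<j1} = {}" "(X \<union> X) \<inter> (R \<union> R) = {}"
      unfolding X_def R_def using j by auto
    show "\<Union>{{a, j1}} \<subseteq> R" "\<Union>{{a, j2}} \<subseteq> R"
      unfolding R_def using j by auto
  next
    fix M M' assume "(M, M') \<in> dc_fiber (X \<union> R) (X \<union> R) {{a, j1}} {{a, j2}}"
    then have M: "nc_matching (X \<union> R) M" and M': "nc_matching (X \<union> R) M'"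
      and dc: "disjoint_compatible M M'" and e1: "{a, j1} \<in> M" and e2: "{a, j2} \<in> M'"
      by (simp_all add: dc_fiber_iff)
    have "is_block X M"
      unfolding X_def by (rule is_block_under_edge[OF M e1 j(1)])
    moreover have "is_block X M'"
      unfolding X_def
    proof (rule is_block_under_compatible_edge[OF M' j(1)])
      show "\<not> crosses {a, j1} e" if "e \<in> M'" for e
        using dc e1 that unfolding disjoint_compatible_def by blast
      show "e \<inter> {a<..<j1} = {}" if "e \<in> M'" "a \<in> e" for e
        using nc_matching_unique[OF M' that(1) e2 that(2)] j by auto
      have "even (card X)"
        by (rule is_block_even_card[OF M \<open>is_block X M\<close>]) (auto simp: X_def)
      then show "{a<..<j1} \<subseteq> X \<union> R" "even (card {a<..<j1})"
        unfolding X_def by auto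
    qed
    ultimately show "is_block X M \<and> is_block X M'" ..
  qed
  moreover have "{a..n} = X \<union> R"
    unfolding X_def R_def using j by auto
  ultimately show ?thesis
    unfolding X_def R_def by simp
qed

lemma card_dc_fiber_first_edges_outer:
  assumes j: "a < j1" "j1 < j2" "j2 \<le> n"
  shows "card (dc_fiber (insert a {j1..n}) (insert a {j1..n}) {{a, j1}} {{a, j2}})
       = card (dc_pairs {j2<..n} {j2<..n}) * card (dc_fiber (insert a {j1..j2}) (insert a {j1..j2}) {{a, j1}} {{a, j2}})"
proof -
  define Y where "Y = {j2<..n}"
  define C where "C = insert a {j1..j2}"
  have aj2: "a < j2"
    using j by simp
  have "card (dc_fiber (Y \<union> C) (Y \<union> C) {{a, j1}} {{a, j2}})
      = card (dc_pairs Y Y) * card (dc_fiber C C {{a, j1}} {{a, j2}})"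
  proof (rule card_dc_fiber_split_interval[where l = j2 and h = n])
    show "finite Y" "finite Y" "finite C" "finite C"
      unfolding Y_def C_def by simp_all
    show "Y \<union> Y \<subseteq> {j2..n}" "(C \<union> C) \<inter> {j2<..<n} = {}" "(Y \<union> Y) \<inter> (C \<union> C) = {}"
      unfolding Y_def C_def using j by auto
    show "\<Union>{{a, j1}} \<subseteq> C" "\<Union>{{a, j2}} \<subseteq> C"
      unfolding C_def using j by auto
  next
    fix M M' assume "(M, M') \<in> dc_fiber (Y \<union> C) (Y \<union> C) {{a, j1}} {{a, j2}}"
    then have M: "nc_matching (Y \<union> C) M" and M': "nc_matching (Y \<union> C) M'"
      and dc: "disjoint_compatible M M'" and e1: "{a, j1} \<in> M" and e2: "{a, j2} \<in> M'"
      by (simp_all add: dc_fiber_iff)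
    have S: "Y \<union> C \<subseteq> {a..}" "Y = (Y \<union> C) \<inter> {j2<..}"
      unfolding Y_def C_def using j by auto
    have "is_block Y M'"
      using is_block_beyond_edge[OF M' e2 aj2 S(1)] S(2) by simp
    moreover have "is_block ((Y \<union> C) \<inter> {j2<..}) M"
    proof (rule is_block_beyond_compatible_edge[OF M aj2 _ _ _ S(1)])
      show "\<not> crosses {a, j2} e" if "e \<in> M" for e
        using dc e2 that crosses_sym[of "{a, j2}" e] unfolding disjoint_compatible_def by blast
      show "e \<subseteq> {a..j2}" if "e \<in> M" "a \<in> e" for e
        using nc_matching_unique[OF M that(1) e1 that(2)] j by auto
      have "even (card Y)"
        by (rule is_block_even_card[OF M' \<open>is_block Y M'\<close>]) (auto simp: Y_def)
      then show "finite (Y \<union> C)" "even (card ((Y \<union> C) \<inter> {j2<..}))"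
        using S(2) unfolding Y_def C_def by auto
    qed
    ultimately show "is_block Y M \<and> is_block Y M'"
      using S(2) by simp
  qed
  moreover have "insert a {j1..n} = Y \<union> C"
    unfolding Y_def C_def using j by auto
  ultimately show ?thesis
    unfolding Y_def C_def by simp
qed

lemma card_dc_fiber_nested_edges:
  assumes j: "a < j1" "j1 < j2"
  shows "card (dc_fiber (insert a {j1..j2}) (insert a {j1..j2}) {{a, j1}} {{a, j2}})
       = card (dc_pairs {j1<..j2} {j1..<j2})"
proof -
  have "insert a {j1..j2} = {j1<..j2} \<union> {a, j1}" "insert a {j1..j2} = {j1..<j2} \<union> {a, j2}"
    using j by auto
  have "card (dc_fiber ({j1<..j2} \<union> {a, j1}) ({j1..<j2} \<union> {a, j2}) {{a, j1}} {{a, j2}})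
      = card (dc_pairs {j1<..j2} {j1..<j2}) * card (dc_fiber {a, j1} {a, j2} {{a, j1}} {{a, j2}})"
  proof (rule card_dc_fiber_split)
    show "finite {j1<..j2}" "finite {j1..<j2}" "finite {a, j1}" "finite {a, j2}"
      by simp_all
    show "{j1<..j2} \<inter> {a, j1} = {}" "{j1..<j2} \<inter> {a, j2} = {}"
      using j by auto
    have "{j1<..j2} \<inter> {a, j2} = {j2}" "{j1..<j2} \<inter> {a, j1} = {j1}"
      using j by auto
    then show "card ({j1<..j2} \<inter> {a, j2}) < 2" "card ({j1..<j2} \<inter> {a, j1}) < 2"
      by simp_all
    show "\<not> crosses e f" if "e \<subseteq> {j1<..j2} \<union> {j1..<j2}" "f \<subseteq> {a, j1} \<union> {a, j2}" for e f
    proof (rule not_crosses_interval(1))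
      show "e \<subseteq> {j1..j2}"
        using that(1) by auto
      have "({a, j1} \<union> {a, j2}) \<inter> {j1<..<j2} = {}"
        using j by auto
      then show "f \<inter> {j1<..<j2} = {}"
        using that(2) by blast
    qed
    show "\<Union>{{a, j1}} \<subseteq> {a, j1}" "\<Union>{{a, j2}} \<subseteq> {a, j2}"
      by simp_all
  next
    fix M M'
    assume "(M, M') \<in> dc_fiber ({j1<..j2} \<union> {a, j1}) ({j1..<j2} \<union> {a, j2}) {{a, j1}} {{a, j2}}"
    then have M: "nc_matching ({a, j1} \<union> {j1<..j2}) M" and M': "nc_matching ({a, j2} \<union> {j1..<j2}) M'"
      and e1: "{a, j1} \<in> M" and e2: "{a, j2} \<in> M'"
      by (simp_all add: dc_fiber_iff Un_commute)
    show "is_block {j1<..j2} M \<and> is_block {j1..<j2} M'"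
      using is_block_complement[OF M is_block_edge[OF M e1]]
        is_block_complement[OF M' is_block_edge[OF M' e2]] j by force
  qed
  then show ?thesis
    using dc_fiber_doubletons[of a j1 j2] j \<open>insert a {j1..j2} = {j1<..j2} \<union> {a, j1}\<close>
      \<open>insert a {j1..j2} = {j1..<j2} \<union> {a, j2}\<close> by simp
qed

lemma card_dc_fiber_first_edges:
  assumes "a < j1" "j1 < j2" "j2 \<le> n"
  shows "card (dc_fiber {a..n} {a..n} {{a, j1}} {{a, j2}})
       = card (dc_pairs {a<..<j1} {a<..<j1}) * card (dc_pairs {j1<..j2} {j1..<j2})
         * card (dc_pairs {j2<..n} {j2<..n})"
  using card_dc_fiber_first_edges_inner[OF assms] card_dc_fiber_first_edges_outer[OF assms]
    card_dc_fiber_nested_edges[OF assms(1,2)] by simp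

section \<open>The recurrences\<close>

definition tcount :: "nat \<Rightarrow> nat" where
  "tcount n = card (dc_pairs {0..<n} {0..<n})"

text \<open>The staggered configurations that remain between the two edges at the first point.\<close>

definition vcount :: "nat \<Rightarrow> nat" where
  "vcount n = card (dc_pairs {1..<n} {0..<n - 1})"

definition wcount :: "nat \<Rightarrow> nat" where
  "wcount n = card (dc_pairs {0..<n} {1..<n - 1})"

lemma card_dc_pairs_open_interval:
  assumes "a < b"
  shows "card (dc_pairs {a<..<b} {a<..<b}) = tcount (b - Suc a)"
proof -
  have "{a<..<b} = {0 + Suc a..<(b - Suc a) + Suc a}"
    using assms by auto
  then show ?thesis
    unfolding tcount_def by (simp only: card_dc_pairs_interval_shift)
qed

lemma card_dc_pairs_vcount:
  assumes "y \<le> p"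
  shows "card (dc_pairs {y<..<Suc p} {y..<p}) = vcount (Suc p - y)"
proof -
  have "{y<..<Suc p} = {1 + y..<(Suc p - y) + y}" "{y..<p} = {0 + y..<(Suc p - y - 1) + y}"
    using assms by auto
  then show ?thesis
    unfolding vcount_def by (simp only: card_dc_pairs_interval_shift)
qed

lemma card_dc_pairs_wcount:
  assumes "y < m"
  shows "card (dc_pairs {y<..<m} {y..<Suc m}) = wcount (Suc m - y)"
proof -
  have "{y..<Suc m} = {0 + y..<(Suc m - y) + y}" "{y<..<m} = {1 + y..<(Suc m - y - 1) + y}"
    using assms by auto
  then have "card (dc_pairs {y..<Suc m} {y<..<m}) = wcount (Suc m - y)"
    unfolding wcount_def by (simp only: card_dc_pairs_interval_shift)
  then show ?thesis
    using card_dc_fiber_swap[of "{y<..<m}" "{y..<Suc m}" "{}" "{}"] by (simp add: dc_fiber_empty_edges)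
qed

lemma tcount_0: "tcount 0 = 1"
  unfolding tcount_def by (simp add: dc_pairs_empty)

lemma vcount_1: "vcount 1 = 1"
  unfolding vcount_def by (simp add: dc_pairs_empty)

lemma tcount_odd:
  assumes "odd n"
  shows "tcount n = 0"
proof -
  have "dc_pairs {0..<n} {0..<n} = {}"
    using nc_matching_even_card[of "{0..<n}"] assms unfolding dc_pairs_def by auto
  then show ?thesis
    unfolding tcount_def by simp
qed

lemma card_dc_fiber_first_edges_counts:
  assumes "0 < j1" "j1 < j2" "j2 \<le> n"
  shows "card (dc_fiber {0..n} {0..n} {{0, j1}} {{0, j2}})
       = tcount (j1 - 1) * vcount (Suc j2 - j1) * tcount (n - j2)"
proof -
  have "{j1<..j2} = {j1<..<Suc j2}" "{j2<..n} = {j2<..<Suc n}"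
    by auto
  then show ?thesis
    using card_dc_fiber_first_edges[OF assms] card_dc_pairs_open_interval[of 0 j1]
      card_dc_pairs_open_interval[of j2 "Suc n"] card_dc_pairs_vcount[of j1 j2] assms
    by simp
qed

lemma card_dc_pairs_by_first_partner:
  assumes "0 < k" "k \<le> Suc l"
  shows "card (dc_pairs {0..<k} {1..<l})
       = (\<Sum>y\<in>{1..<k}. tcount (y - 1) * card (dc_pairs {y<..<k} {y..<l}))"
proof -
  have "card (dc_pairs {0..<k} {1..<l}) = (\<Sum>y\<in>{0..<k} - {0}. card (dc_fiber {0..<k} {1..<l} {{0, y}} {}))"
    using card_dc_fiber_partner[of "{0..<k}" "{1..<l}" 0 "{}" "{}"] assms(1)
    by (simp add: dc_fiber_empty_edges)
  also have "\<dots> = (\<Sum>y\<in>{1..<k}. tcount (y - 1) * card (dc_pairs {y<..<k} {y..<l}))"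
  proof (rule sum.cong)
    show "{0..<k} - {0} = {1..<k}"
      by auto
  next
    fix y assume y: "y \<in> {1..<k}"
    have split: "{0..<k} = {0..y} \<union> {y<..<k}" "{1..<l} = {0<..<y} \<union> {y..<l}"
      using y assms(2) by auto
    have "card (dc_fiber ({0..y} \<union> {y<..<k}) ({0<..<y} \<union> {y..<l}) {{0, y}} {})
        = card (dc_pairs {0<..<y} {0<..<y}) * card (dc_pairs {y<..<k} {y..<l})"
      by (rule card_dc_fiber_first_edge) (use y in auto)
    then show "card (dc_fiber {0..<k} {1..<l} {{0, y}} {}) = tcount (y - 1) * card (dc_pairs {y<..<k} {y..<l})"
      unfolding split using card_dc_pairs_open_interval[of 0 y] y by simp
  qed
  finally show ?thesis .
qed

lemma vcount_Suc:
  "(if 2 \<le> Suc m then vcount (Suc m) else 0)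
     = (\<Sum>i=0..m. tcount i * (if 2 \<le> m - i then wcount (m - i) else 0))"
proof (cases "m = 0")
  case False
  have "vcount (Suc m) = card (dc_pairs {0..<m} {1..<Suc m})"
    using card_dc_fiber_swap[of "{1..<Suc m}" "{0..<m}" "{}" "{}"]
    unfolding vcount_def by (simp add: dc_fiber_empty_edges)
  also have "\<dots> = (\<Sum>y\<in>{1..<m}. tcount (y - 1) * card (dc_pairs {y<..<m} {y..<Suc m}))"
    by (rule card_dc_pairs_by_first_partner) (use False in auto)
  also have "\<dots> = (\<Sum>y\<in>{1..<m}. tcount (y - 1) * wcount (Suc m - y))"
    by (rule sum.cong) (simp_all add: card_dc_pairs_wcount)
  also have "\<dots> = (\<Sum>i\<in>{0..<m - 1}. tcount i * wcount (m - i))"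
    using False sum.atLeast_Suc_lessThan_Suc_shift[of "\<lambda>y. tcount (y - 1) * wcount (Suc m - y)" 0 "m - 1"]
    by simp
  also have "\<dots> = (\<Sum>i=0..m. tcount i * (if 2 \<le> m - i then wcount (m - i) else 0))"
    by (rule sum.mono_neutral_cong_left) auto
  finally show ?thesis
    using False by simp
qed simp

lemma wcount_Suc:
  "(if 2 \<le> Suc p then wcount (Suc p) else 0)
     = (\<Sum>i=0..p. tcount i * (if 1 \<le> p - i then vcount (p - i) else 0))"
proof (cases "p = 0")
  case False
  have "wcount (Suc p) = card (dc_pairs {0..<Suc p} {1..<p})"
    unfolding wcount_def by simp
  also have "\<dots> = (\<Sum>y\<in>{1..<Suc p}. tcount (y - 1) * card (dc_pairs {y<..<Suc p} {y..<p}))"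
    by (rule card_dc_pairs_by_first_partner) auto
  also have "\<dots> = (\<Sum>y\<in>{1..<Suc p}. tcount (y - 1) * vcount (Suc p - y))"
    by (rule sum.cong) (simp_all add: card_dc_pairs_vcount)
  also have "\<dots> = (\<Sum>i\<in>{0..<p}. tcount i * vcount (p - i))"
    using sum.atLeast_Suc_lessThan_Suc_shift[of "\<lambda>y. tcount (y - 1) * vcount (Suc p - y)" 0 p]
    by simp
  also have "\<dots> = (\<Sum>i=0..p. tcount i * (if 1 \<le> p - i then vcount (p - i) else 0))"
    by (rule sum.mono_neutral_cong_left) auto
  finally show ?thesis
    using False by simp
qed simp

lemma sum_symmetric_offdiagonal:
  fixes c :: "'a::linorder \<Rightarrow> 'a \<Rightarrow> 'b::comm_semiring_1"
  assumes sym: "\<And>a b. c a b = c b a" and diag: "\<And>a. c a a = 0"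
  shows "(\<Sum>a\<in>I. \<Sum>b\<in>I. c a b) = 2 * (\<Sum>a\<in>I. \<Sum>b\<in>I. if a < b then c a b else 0)"
proof -
  define g where "g a b = (if a < b then c a b else 0)" for a b
  have "c a b = g a b + g b a" for a b
    unfolding g_def using sym[of a b] diag[of a] by (cases a b rule: linorder_cases) auto
  then have "(\<Sum>a\<in>I. \<Sum>b\<in>I. c a b) = (\<Sum>a\<in>I. \<Sum>b\<in>I. g a b) + (\<Sum>a\<in>I. \<Sum>b\<in>I. g b a)"
    by (simp add: sum.distrib)
  also have "(\<Sum>a\<in>I. \<Sum>b\<in>I. g b a) = (\<Sum>a\<in>I. \<Sum>b\<in>I. g a b)"
    by (rule sum.swap)
  finally show ?thesis
    unfolding g_def by (simp add: mult_2)
qed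

lemma sum_ordered_pairs_convolution:
  fixes f g h :: "nat \<Rightarrow> 'a::comm_semiring_1"
  shows "(\<Sum>j1\<in>{1..n}. \<Sum>j2\<in>{1..n}. if j1 < j2 then f (j1 - 1) * g (Suc j2 - j1) * h (n - j2) else 0)
       = (\<Sum>i=0..n. f i * (\<Sum>m=0..n - i. (if 2 \<le> m then g m else 0) * h (n - i - m)))"
proof -
  define F where
    "F j1 = (\<Sum>j2\<in>{1..n}. if j1 < j2 then f (j1 - 1) * g (Suc j2 - j1) * h (n - j2) else 0)" for j1
  have inner: "F (Suc i) = f i * (\<Sum>m=0..n - i. (if 2 \<le> m then g m else 0) * h (n - i - m))"
    if "i \<le> n" for i
  proof -
    have "F (Suc i) = (\<Sum>j2\<in>{i..n}. f i * ((if 2 \<le> j2 - i then g (j2 - i) else 0) * h (n - j2)))"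
      unfolding F_def by (rule sum.mono_neutral_cong) (auto simp: Suc_diff_Suc mult.assoc)
    also have "\<dots> = (\<Sum>m=0..n - i. f i * ((if 2 \<le> m then g m else 0) * h (n - i - m)))"
      using that sum.shift_bounds_cl_nat_ivl[of "\<lambda>j2. f i * ((if 2 \<le> j2 - i then g (j2 - i) else 0) * h (n - j2))" 0 i "n - i"]
      by (auto simp: diff_diff_left add.commute intro!: sum.cong)
    finally show ?thesis
      by (simp add: sum_distrib_left)
  qed
  have "(\<Sum>j1\<in>{1..n}. F j1) = (\<Sum>i<n. F (Suc i))"
    using sum.atLeast1_atMost_eq[of F n] by simp
  also have "\<dots> = (\<Sum>i<n. f i * (\<Sum>m=0..n - i. (if 2 \<le> m then g m else 0) * h (n - i - m)))"
    by (rule sum.cong) (simp_all add: inner)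
  also have "\<dots> = (\<Sum>i=0..n. f i * (\<Sum>m=0..n - i. (if 2 \<le> m then g m else 0) * h (n - i - m)))"
    by (simp add: atLeast0AtMost lessThan_Suc_atMost[symmetric])
  finally show ?thesis
    unfolding F_def .
qed

lemma tcount_Suc:
  "tcount (Suc n)
     = 2 * (\<Sum>i=0..n. tcount i * (\<Sum>m=0..n - i. (if 2 \<le> m then vcount m else 0) * tcount (n - i - m)))"
proof -
  define c where "c j1 j2 = card (dc_fiber {0..n} {0..n} {{0, j1}} {{0, j2}})" for j1 j2
  have "{0..n} - {0} = {1..n}"
    by auto
  then have "tcount (Suc n) = (\<Sum>j1\<in>{1..n}. \<Sum>j2\<in>{1..n}. c j1 j2)"
    using card_dc_fiber_partner[of "{0..n}" "{0..n}" 0 "{}" "{}"]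
      card_dc_fiber_partner_snd[of "{0..n}" "{0..n}" 0 "{{0, _}}" "{}"]
    unfolding tcount_def c_def by (simp add: dc_fiber_empty_edges atLeastLessThanSuc_atLeastAtMost)
  also have "\<dots> = 2 * (\<Sum>j1\<in>{1..n}. \<Sum>j2\<in>{1..n}. if j1 < j2 then c j1 j2 else 0)"
  proof (rule sum_symmetric_offdiagonal)
    show "c j1 j2 = c j2 j1" for j1 j2
      unfolding c_def by (rule card_dc_fiber_swap[symmetric])
    have "dc_fiber {0..n} {0..n} {{0, j}} {{0, j}} = {}" for j
      unfolding dc_fiber_def dc_pairs_def disjoint_compatible_def by auto
    then show "c j j = 0" for j
      unfolding c_def by simp
  qed
  also have "\<dots> = 2 * (\<Sum>j1\<in>{1..n}. \<Sum>j2\<in>{1..n}.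
      if j1 < j2 then tcount (j1 - 1) * vcount (Suc j2 - j1) * tcount (n - j2) else 0)"
    unfolding c_def by (intro arg_cong[where f = "(*) 2"] sum.cong refl)
      (auto simp: card_dc_fiber_first_edges_counts)
  also have "\<dots> = 2 * (\<Sum>i=0..n. tcount i * (\<Sum>m=0..n - i. (if 2 \<le> m then vcount m else 0) * tcount (n - i - m)))"
    by (simp only: sum_ordered_pairs_convolution)
  finally show ?thesis .
qed

lemma card_symmetric_irreflexive:
  assumes fin: "finite R" and sym: "\<And>x y. (x, y) \<in> R \<Longrightarrow> (y, x) \<in> R"
    and irrefl: "\<And>x. (x, x) \<notin> R"
  shows "card R = 2 * card ((\<lambda>(x, y). {x, y}) ` R)"
proof -
  define E where "E = (\<lambda>(x, y). {x, y}) ` R"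
  have fiber: "{p \<in> R. (\<lambda>(x, y). {x, y}) p = e} = {(x, y), (y, x)}" if "(x, y) \<in> R" "e = {x, y}" for x y e
  proof (intro equalityI subsetI)
    fix p assume "p \<in> {p \<in> R. (\<lambda>(x, y). {x, y}) p = e}"
    then show "p \<in> {(x, y), (y, x)}"
      using that(2) by (cases p) (auto simp: doubleton_eq_iff)
  qed (use that sym in auto)
  have "card R = card (\<Union>e\<in>E. {p \<in> R. (\<lambda>(x, y). {x, y}) p = e})"
    unfolding E_def by (rule arg_cong[where f = card]) blast
  also have "\<dots> = (\<Sum>e\<in>E. card {p \<in> R. (\<lambda>(x, y). {x, y}) p = e})"
    by (rule card_UN_disjoint) (use fin in \<open>auto simp: E_def\<close>)
  also have "\<dots> = (\<Sum>e\<in>E. 2)"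
  proof (rule sum.cong)
    fix e assume "e \<in> E"
    then obtain x y where xy: "(x, y) \<in> R" "e = {x, y}"
      unfolding E_def by auto
    then have "x \<noteq> y"
      using irrefl by blast
    then show "card {p \<in> R. (\<lambda>(x, y). {x, y}) p = e} = 2"
      unfolding fiber[OF xy] by simp
  qed simp
  finally show ?thesis
    unfolding E_def by simp
qed

lemma tcount_dcm:
  assumes "1 \<le> k"
  shows "tcount (2 * k) = 2 * card (dcm_edge_set k)"
proof -
  define S where "S = {0..<2 * k}"
  have "dcm_edge_set k = (\<lambda>(x, y). {x, y}) ` dc_pairs S S"
    unfolding dcm_edge_set_def dcm_adj_def dc_pairs_def S_def is_matching_iff_nc_matching by auto
  moreover have "(M', M) \<in> dc_pairs S S" if "(M, M') \<in> dc_pairs S S" for M M'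
    using that by (simp add: dc_pairs_iff disjoint_compatible_sym)
  moreover have "(M, M) \<notin> dc_pairs S S" for M
  proof
    assume "(M, M) \<in> dc_pairs S S"
    then have "nc_matching S M" "M \<inter> M = {}"
      unfolding dc_pairs_iff disjoint_compatible_def by blast+
    moreover have "0 \<in> S"
      using assms unfolding S_def by simp
    ultimately show False
      using nc_matching_covers by blast
  qed
  ultimately show ?thesis
    using card_symmetric_irreflexive[of "dc_pairs S S"] finite_dc_pairs[of S S]
    unfolding tcount_def S_def by simp
qed

section \<open>Generating functions\<close>

lemma fps_eq_X_mult:
  fixes F G :: "'a::comm_ring_1 fps"
  assumes "G $ 0 = 0" "\<And>k. G $ Suc k = F $ k"
  shows "G = fps_X * F"
proof (rule fps_ext)
  fix n show "G $ n = (fps_X * F) $ n"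
    using assms by (cases n) simp_all
qed

lemma tcount_fps_equation:
  defines "T \<equiv> Abs_fps (\<lambda>n. of_nat (tcount n) :: rat)"
  shows "T * (1 - fps_X ^ 2 * T ^ 2) = 1 - fps_X ^ 2 * T ^ 2 + 2 * fps_X ^ 4 * T ^ 4"
proof -
  define A where "A = Abs_fps (\<lambda>n. of_nat (if 2 \<le> n then vcount n else 0) :: rat)"
  define B where "B = Abs_fps (\<lambda>n. of_nat (if 2 \<le> n then wcount n else 0) :: rat)"
  have Tn: "T $ n = of_nat (tcount n)" for n
    unfolding T_def by simp
  have An: "A $ n = of_nat (if 2 \<le> n then vcount n else 0)" for n
    unfolding A_def by simp
  have Bn: "B $ n = of_nat (if 2 \<le> n then wcount n else 0)" for n
    unfolding B_def by simp
  have "T - 1 = fps_X * (T * (A * T) + T * (A * T))"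
  proof (rule fps_eq_X_mult)
    show "(T - 1) $ 0 = 0"
      by (simp add: Tn tcount_0)
    fix k
    have "(T * (A * T)) $ k = (\<Sum>i=0..k. of_nat (tcount i) *
        (\<Sum>m=0..k - i. of_nat (if 2 \<le> m then vcount m else 0) * of_nat (tcount (k - i - m))))"
      unfolding fps_mult_nth T_def A_def fps_nth_Abs_fps by (rule refl)
    moreover have "(of_nat (tcount (Suc k)) :: rat) = 2 * (\<Sum>i=0..k. of_nat (tcount i) *
        (\<Sum>m=0..k - i. of_nat (if 2 \<le> m then vcount m else 0) * of_nat (tcount (k - i - m))))"
      unfolding tcount_Suc[of k] of_nat_mult of_nat_sum of_nat_numeral by (rule refl)
    moreover have "(T - 1) $ Suc k = of_nat (tcount (Suc k))"
      by (simp add: Tn)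
    ultimately show "(T - 1) $ Suc k = (T * (A * T) + T * (A * T)) $ k"
      by (simp only: fps_add_nth mult_2)
  qed
  moreover have "A = fps_X * (T * B)"
  proof (rule fps_eq_X_mult)
    show "A $ 0 = 0" "A $ Suc k = (T * B) $ k" for k
      unfolding An vcount_Suc[of k] of_nat_sum of_nat_mult fps_mult_nth Tn Bn by simp_all
  qed
  moreover have "B = fps_X * (T * (fps_X + A))"
  proof (rule fps_eq_X_mult)
    have XAn: "(fps_X + A) $ q = of_nat (if 1 \<le> q then vcount q else 0)" for q
      using vcount_1 by (cases "q = 1") (simp_all add: An)
    show "B $ 0 = 0" "B $ Suc k = (T * (fps_X + A)) $ k" for k
      unfolding Bn wcount_Suc[of k] of_nat_sum of_nat_mult fps_mult_nth Tn XAn by simp_all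
  qed
  ultimately show ?thesis
    by algebra
qed

lemma fps_compose_X2_nth:
  fixes F :: "'a::comm_ring_1 fps"
  shows "(F oo fps_X ^ 2) $ n = (if even n then F $ (n div 2) else 0)"
proof -
  have "(F oo fps_X ^ 2) $ n = (\<Sum>i=0..n. if i = n div 2 then (if even n then F $ i else 0) else 0)"
    unfolding fps_compose_nth
  proof (rule sum.cong)
    fix i
    have "((fps_X ^ 2) ^ i :: 'a fps) = fps_X ^ (2 * i)"
      by (simp add: power_mult)
    then show "F $ i * (fps_X ^ 2) ^ i $ n = (if i = n div 2 then (if even n then F $ i else 0) else 0)"
      by (auto simp: fps_X_power_nth)
  qed simp
  also have "\<dots> = (if even n then F $ (n div 2) else 0)"
    by (simp add: sum.delta)
  finally show ?thesis .
qed

lemma fps_compose_X2_cancel: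
  fixes F G :: "'a::comm_ring_1 fps"
  assumes "F oo fps_X ^ 2 = G oo fps_X ^ 2"
  shows "F = G"
proof (rule fps_ext)
  fix k
  have "F $ k = (F oo fps_X ^ 2) $ (2 * k)" "G $ k = (G oo fps_X ^ 2) $ (2 * k)"
    by (simp_all add: fps_compose_X2_nth)
  then show "F $ k = G $ k"
    using assms by simp
qed

lemma tcount_fps_even_part:
  "Abs_fps (\<lambda>n. of_nat (tcount n) :: 'a::comm_ring_1) = Abs_fps (\<lambda>k. of_nat (tcount (2 * k))) oo fps_X ^ 2"
  by (rule fps_ext) (simp add: fps_compose_X2_nth tcount_odd)

lemma dcm_fps_equation:
  fixes Z :: "rat fps"
  assumes "Z = Abs_fps (\<lambda>k. of_nat (tcount (2 * k)))"
  shows "Z * (1 - fps_X * Z ^ 2) = 1 - fps_X * Z ^ 2 + 2 * fps_X ^ 2 * Z ^ 4"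
proof (rule fps_compose_X2_cancel)
  define T where "T = Z oo fps_X ^ 2"
  have X2: "(fps_X ^ 2 :: rat fps) $ 0 = 0"
    by simp
  have X4: "(fps_X ^ 2) ^ 2 = (fps_X ^ 4 :: rat fps)"
    by (simp flip: power_mult)
  have two: "(2 :: rat fps) oo fps_X ^ 2 = 2"
    by (simp only: one_add_one[symmetric] fps_compose_add_distrib fps_compose_1)
  have "(Z * (1 - fps_X * Z ^ 2)) oo fps_X ^ 2 = T * (1 - fps_X ^ 2 * T ^ 2)"
    unfolding T_def
    by (simp only: fps_compose_sub_distrib fps_compose_mult_distrib[OF X2]
        fps_compose_power[OF X2, symmetric] fps_compose_1 fps_X_fps_compose_startby0[OF X2])
  moreover have "(1 - fps_X * Z ^ 2 + 2 * fps_X ^ 2 * Z ^ 4) oo fps_X ^ 2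
      = 1 - fps_X ^ 2 * T ^ 2 + 2 * fps_X ^ 4 * T ^ 4"
    unfolding T_def X4[symmetric]
    by (simp only: fps_compose_sub_distrib fps_compose_add_distrib fps_compose_mult_distrib[OF X2]
        fps_compose_power[OF X2, symmetric] fps_compose_1 fps_X_fps_compose_startby0[OF X2] two)
  moreover have "T = Abs_fps (\<lambda>n. of_nat (tcount n))"
    unfolding T_def assms by (rule tcount_fps_even_part[symmetric])
  ultimately show "(Z * (1 - fps_X * Z ^ 2)) oo fps_X ^ 2 = (1 - fps_X * Z ^ 2 + 2 * fps_X ^ 2 * Z ^ 4) oo fps_X ^ 2"
    using tcount_fps_equation by simp
qed

lemma fps_eq_one_plus_divide:
  fixes Z B D :: "'a::field fps"
  assumes "Z * D = D + B" and "D $ 0 \<noteq> 0"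
  shows "Z = 1 + B / D"
proof -
  have "D dvd 1" "D \<noteq> 0"
    using assms(2) by auto
  have "Z = Z * D div D"
    using \<open>D \<noteq> 0\<close> by simp
  also have "\<dots> = D div D + B div D"
    unfolding assms(1) using \<open>D dvd 1\<close> by (intro div_add) (simp_all add: unit_imp_dvd)
  also have "\<dots> = 1 + B / D"
    using \<open>D \<noteq> 0\<close> by simp
  finally show ?thesis .
qed

theorem mainTheorem19:
  fixes z Z :: "rat fps"
  assumes "z = Abs_fps (\<lambda>k. of_nat (dcm_d k))"
    and "Z = 2 * z - 1"
  shows "Z = 1 + (2 * fps_X ^ 2 * Z ^ 4) / (1 - fps_X * Z ^ 2)"
proof -
  have "Z $ k = of_nat (tcount (2 * k))" for k
    unfolding assms fps_numeral_fps_const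
    by (cases "k = 0") (simp_all add: dcm_d_def tcount_0 tcount_dcm)
  then have "Z = Abs_fps (\<lambda>k. of_nat (tcount (2 * k)))"
    by (intro fps_ext) simp
  then have "Z * (1 - fps_X * Z ^ 2) = (1 - fps_X * Z ^ 2) + 2 * fps_X ^ 2 * Z ^ 4"
    by (rule dcm_fps_equation)
  then show ?thesis
    by (rule fps_eq_one_plus_divide) simp
qed

end
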